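(* Let $X=\sum_{i=1}^n X_i$ be a sum of independent discrete random variables $X_i$ taking values in $[0,1]$, let $0<\varepsilon<1$ and write $L=\ln\varepsilon<0$. For real $\phi>-6L$ define $$\delta(\phi)=\frac{-3L+\sqrt{L^2-8\phi L}}{2(\phi+L)}.$$ Then for every $\phi>-6L$, $\delta(\phi)\in(0,1)$ and $\delta(\phi)$ is the unique positive solution $\delta$ of $$\exp\!\Big(-\frac{\delta^2}{2+\delta}\cdot\frac{\phi}{1+\delta}\Big)=\varepsilon .$$ Moreover, $$\Pr\Big(X>-6L \ \text{ and }\ \frac{X}{1+\delta(X)}\ge \mathbb{E}[X]\Big)\le\varepsilon, \qquad \Pr\Big(X>-6L \ \text{ and }\ \frac{X}{1-\delta(X)}\le \mathbb{E}[X]\Big)\le\varepsilon .$$ *)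

theory Defs
  imports "HOL-Probability.Probability"
begin

definition chernoff_delta :: "real \<Rightarrow> real \<Rightarrow> real" where
  "chernoff_delta eps phi =
     (let L = ln eps in (-3 * L + sqrt (L^2 - 8 * phi * L)) / (2 * (phi + L)))"

end

theory Submission
  imports Defs "HOL-Library.Quadratic_Discriminant"
begin

text \<open>
  For a fixed threshold phi, choosing s = ln (1 + delta) resp. s = ln (1 - delta) in the
  exponential Chernoff bound P(s X >= s phi) <= exp (- s phi + (exp s - 1) E X), and using
  ln (1 + d) >= 2 d / (2 + d) resp. - ln (1 - d) <= (1 / (1 - d) - (1 - d)) / 2, bounds either
  tail by exp (- delta^2 / (2 + delta) * phi / (1 + delta)). Clearing denominators, this equals
  eps exactly when delta is the positive root of (phi + L) d^2 + 3 L d + 2 L, i.e. delta(phi).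
  Since the threshold in the events is X itself, each event is the union of the tails at the
  admissible thresholds phi; these tails are nested, so continuity of the measure along a
  coinitial sequence of thresholds preserves the bound eps.
\<close>

lemma ln_one_plus_ge:
  fixes x :: real
  assumes "0 \<le> x"
  shows "2 * x / (2 + x) \<le> ln (1 + x)"
proof -
  let ?f = "\<lambda>x::real. ln (1 + x) - 2 * x / (2 + x)"
  have "?f 0 \<le> ?f x"
  proof (rule DERIV_nonneg_imp_nondecreasing[OF assms])
    fix t :: real
    assume t: "0 \<le> t" "t \<le> x"
    have "DERIV ?f t :> 1 / (1 + t) - 4 / (2 + t)^2"
      by (insert t, (rule derivative_eq_intros refl | simp)+) (simp add: field_simps power2_eq_square)
    moreover have "1 / (1 + t) - 4 / (2 + t)^2 = t^2 / ((1 + t) * (2 + t)^2)"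
      using t by (simp add: field_simps) (simp add: power2_eq_square algebra_simps)
    ultimately show "\<exists>y. DERIV ?f t :> y \<and> 0 \<le> y"
      using t by auto
  qed
  then show ?thesis by simp
qed

lemma ln_le_half_diff_inverse:
  fixes y :: real
  assumes "1 \<le> y"
  shows "ln y \<le> (y - 1 / y) / 2"
proof -
  let ?f = "\<lambda>y::real. (y - 1 / y) / 2 - ln y"
  have "?f 1 \<le> ?f y"
  proof (rule DERIV_nonneg_imp_nondecreasing[OF assms])
    fix t :: real
    assume t: "1 \<le> t" "t \<le> y"
    have "DERIV ?f t :> (1 + 1 / t^2) / 2 - 1 / t"
      using t by (auto intro!: derivative_eq_intros simp: field_simps power2_eq_square)
    moreover have "(1 + 1 / t^2) / 2 - 1 / t = (t - 1)^2 / (2 * t^2)"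
      using t by (simp add: field_simps power2_eq_square)
    ultimately show "\<exists>y. DERIV ?f t :> y \<and> 0 \<le> y"
      by auto
  qed
  then show ?thesis by simp
qed

lemma quadratic_positive_root:
  fixes a b c r x :: real
  assumes a: "0 < a" and c: "c < 0" and r: "r = (- b + sqrt (discrim a b c)) / (2 * a)"
  shows "0 < r"
    and "0 < x \<Longrightarrow> a * x^2 + b * x + c = 0 \<longleftrightarrow> x = r"
    and "0 < x \<Longrightarrow> 0 < a * x^2 + b * x + c \<longleftrightarrow> r < x"
proof -
  define s where "s = sqrt (discrim a b c)"
  define r' where "r' = (- b - s) / (2 * a)"
  have D: "b^2 < discrim a b c"
    using a c by (simp add: discrim_def mult_pos_neg)
  then have "sqrt (b^2) < s"
    unfolding s_def by (rule real_sqrt_less_mono)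
  then have "\<bar>b\<bar> < s"
    by simp
  then show "0 < r"
    using a by (simp add: r s_def[symmetric] abs_less_iff)
  have r': "r' < 0"
    using \<open>\<bar>b\<bar> < s\<close> a by (simp add: r'_def divide_neg_pos abs_less_iff)
  have "0 \<le> discrim a b c"
    using D zero_le_power2[of b] by linarith
  then have "s^2 = b^2 - 4 * a * c"
    by (simp add: s_def discrim_def)
  then have factor: "a * x^2 + b * x + c = a * (x - r) * (x - r')" for x
    using a unfolding r r'_def s_def[symmetric]
    by (simp add: field_simps power2_eq_square) (metis distrib_left)
  show "0 < x \<Longrightarrow> a * x^2 + b * x + c = 0 \<longleftrightarrow> x = r"
    and "0 < x \<Longrightarrow> 0 < a * x^2 + b * x + c \<longleftrightarrow> r < x"
    using a r' unfolding factor by (simp_all add: zero_less_mult_iff)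
qed

lemma exp_chernoff_exponent_eq_iff:
  fixes eps phi d :: real
  assumes "0 < eps" "0 < d"
  shows "exp (- (d^2 / (2 + d)) * (phi / (1 + d))) = eps \<longleftrightarrow>
         (phi + ln eps) * d^2 + 3 * ln eps * d + 2 * ln eps = 0"
proof -
  have expand: "(phi + ln eps) * d^2 + 3 * ln eps * d + 2 * ln eps =
                d^2 * phi + ln eps * ((2 + d) * (1 + d))"
    by (simp add: algebra_simps power2_eq_square)
  have "exp (- (d^2 / (2 + d)) * (phi / (1 + d))) = eps \<longleftrightarrow>
        - (d^2 / (2 + d)) * (phi / (1 + d)) = ln eps"
    using assms(1) by auto
  also have "\<dots> \<longleftrightarrow> - (d^2 * phi) = ln eps * ((2 + d) * (1 + d))"
  proof -
    have "(2 + d) * (1 + d) \<noteq> 0"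
      using assms(2) by simp
    moreover have "- (d^2 / (2 + d)) * (phi / (1 + d)) = - (d^2 * phi) / ((2 + d) * (1 + d))"
      by simp
    ultimately show ?thesis
      by (simp only: divide_eq_eq not_False_eq_True if_True)
  qed
  also have "\<dots> \<longleftrightarrow> (phi + ln eps) * d^2 + 3 * ln eps * d + 2 * ln eps = 0"
    unfolding expand by linarith
  finally show ?thesis .
qed

lemma chernoff_delta_eq_quadratic_root:
  "chernoff_delta eps phi =
     (- (3 * ln eps) + sqrt (discrim (phi + ln eps) (3 * ln eps) (2 * ln eps))) / (2 * (phi + ln eps))"
  unfolding chernoff_delta_def Let_def discrim_def by (simp add: power2_eq_square algebra_simps)

lemma chernoff_delta_characterization:
  fixes eps phi d :: real
  assumes eps: "0 < eps" "eps < 1" and phi: "- 6 * ln eps < phi"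
  shows "chernoff_delta eps phi \<in> {0<..<1}"
    and "0 < d \<Longrightarrow> exp (- (d^2 / (2 + d)) * (phi / (1 + d))) = eps \<longleftrightarrow> d = chernoff_delta eps phi"
proof -
  have "ln eps < 0"
    using eps by simp
  then have a: "0 < phi + ln eps" and c: "2 * ln eps < 0"
    using phi by linarith+
  note root = quadratic_positive_root[OF a c chernoff_delta_eq_quadratic_root]
  show "0 < d \<Longrightarrow> exp (- (d^2 / (2 + d)) * (phi / (1 + d))) = eps \<longleftrightarrow> d = chernoff_delta eps phi"
    using root(2) exp_chernoff_exponent_eq_iff[OF eps(1)] by simp
  have "chernoff_delta eps phi < 1"
    using root(3)[of 1] phi by simp
  then show "chernoff_delta eps phi \<in> {0<..<1}"
    using root(1) by simp
qed

lemma chernoff_delta_exponent: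
  fixes eps phi :: real
  assumes "0 < eps" "eps < 1" "- 6 * ln eps < phi"
  shows "- ((chernoff_delta eps phi)^2 / (2 + chernoff_delta eps phi))
           * (phi / (1 + chernoff_delta eps phi)) = ln eps"
  using chernoff_delta_characterization[OF assms] by (metis greaterThanLessThan_iff ln_exp)

lemma upper_chernoff_exponent_le:
  fixes d phi mu :: real
  assumes d: "0 < d" and phi: "0 < phi" and mu: "mu \<le> phi / (1 + d)"
  shows "- ln (1 + d) * phi + d * mu \<le> - (d^2 / (2 + d)) * (phi / (1 + d))"
proof -
  have "2 * d / (2 + d) * phi \<le> ln (1 + d) * phi"
    using ln_one_plus_ge[of d] d phi by (intro mult_right_mono) auto
  moreover have "d * mu \<le> d * (phi / (1 + d))"
    using mu d by (intro mult_left_mono) auto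
  moreover have "- (2 * d / (2 + d) * phi) + d * (phi / (1 + d)) = - (d^2 / (2 + d)) * (phi / (1 + d))"
    using d by (simp add: field_simps) (simp add: power2_eq_square algebra_simps)
  ultimately show ?thesis
    by linarith
qed

lemma lower_chernoff_exponent_le:
  fixes d phi mu :: real
  assumes d: "0 < d" "d < 1" and phi: "0 < phi" and mu: "phi / (1 - d) \<le> mu"
  shows "- ln (1 - d) * phi - d * mu \<le> - (d^2 / (2 + d)) * (phi / (1 + d))"
proof -
  have "- ln (1 - d) = ln (1 / (1 - d))"
    using d by (simp add: ln_div)
  also have "\<dots> \<le> (1 / (1 - d) - 1 / (1 / (1 - d))) / 2"
    using d by (intro ln_le_half_diff_inverse) simp
  also have "\<dots> = (1 / (1 - d) - (1 - d)) / 2"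
    by simp
  finally have "- ln (1 - d) * phi \<le> (1 / (1 - d) - (1 - d)) / 2 * phi"
    using phi by (intro mult_right_mono) auto
  moreover have "d * (phi / (1 - d)) \<le> d * mu"
    using mu d by (intro mult_left_mono) auto
  moreover have "(1 / u - u) / 2 * phi - (1 - u) * (phi / u) = - ((1 - u)^2 * phi / (2 * u))"
    if "u \<noteq> 0" for u
    using that by (simp add: field_simps) (simp add: power2_eq_square algebra_simps)
  from this[of "1 - d"]
  have "(1 / (1 - d) - (1 - d)) / 2 * phi - d * (phi / (1 - d)) = - (d^2 * phi / (2 * (1 - d)))"
    using d by simp
  moreover have "d^2 * phi / ((2 + d) * (1 + d)) \<le> d^2 * phi / (2 * (1 - d))"
    using d phi by (intro frac_le) (auto simp: algebra_simps)
  moreover have "(d^2 / (2 + d)) * (phi / (1 + d)) = d^2 * phi / ((2 + d) * (1 + d))"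
    by simp
  ultimately show ?thesis
    by linarith
qed

lemma exp_mult_le_chord:
  fixes s y :: real
  assumes "0 \<le> y" "y \<le> 1"
  shows "exp (s * y) \<le> 1 + y * (exp s - 1)"
  using convex_onD[OF exp_convex, of y 0 s] assms by (simp add: algebra_simps)

lemma real_set_antimono_coinitial_seq:
  fixes T :: "real set"
  assumes "T \<noteq> {}"
  obtains u :: "nat \<Rightarrow> real"
  where "antimono u" and "\<And>k. \<exists>t\<in>T. t \<le> u k" and "\<And>x. x \<in> T \<Longrightarrow> \<exists>k. u k \<le> x"
proof (cases "bdd_below T")
  case False
  show ?thesis
  proof
    show "antimono (\<lambda>k. - real k)"
      by (simp add: antimono_def)
    show "\<exists>t\<in>T. t \<le> - real k" for k
      using False unfolding bdd_below_def by (meson not_le less_imp_le)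
    show "\<exists>k. - real k \<le> x" for x
      using real_arch_simple[of "- x"] by (metis minus_le_iff)
  qed
next
  case bdd: True
  show ?thesis
  proof (cases "Inf T \<in> T")
    case True
    then show ?thesis
      using bdd by (intro that[of "\<lambda>_. Inf T"]) (auto simp: antimono_def intro: cInf_lower)
  next
    case False
    show ?thesis
    proof
      show "antimono (\<lambda>k. Inf T + 1 / real (Suc k))"
        by (simp add: antimono_def frac_le)
      show "\<exists>t\<in>T. t \<le> Inf T + 1 / real (Suc k)" for k
        using cInf_lessD[OF assms, of "Inf T + 1 / real (Suc k)"] by (auto intro: less_imp_le)
      fix x
      assume "x \<in> T"
      with False bdd have "0 < x - Inf T"
        by (metis cInf_lower diff_gt_0_iff_gt order_le_less)
      then obtain k where "inverse (real (Suc k)) < x - Inf T"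
        using reals_Archimedean by blast
      then show "\<exists>k. Inf T + 1 / real (Suc k) \<le> x"
        by (auto simp: inverse_eq_divide intro!: exI[of _ k])
    qed
  qed
qed

context prob_space
begin

lemma nn_integral_exp_mult_le:
  fixes Y :: "'a \<Rightarrow> real"
  assumes [measurable]: "Y \<in> borel_measurable M"
    and range01: "\<And>\<omega>. \<omega> \<in> space M \<Longrightarrow> Y \<omega> \<in> {0..1}"
  shows "(\<integral>\<^sup>+\<omega>. ennreal (exp (s * Y \<omega>)) \<partial>M) \<le> ennreal (exp ((exp s - 1) * expectation Y))"
proof -
  have int: "integrable M Y"
    using range01 by (intro integrable_const_bound[where B = 1]) auto
  have chord: "exp (s * Y \<omega>) \<le> 1 + Y \<omega> * (exp s - 1)" if "\<omega> \<in> space M" for \<omega>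
    using range01[OF that] by (intro exp_mult_le_chord) auto
  have nonneg: "0 \<le> 1 + Y \<omega> * (exp s - 1)" if "\<omega> \<in> space M" for \<omega>
    using chord[OF that] exp_gt_zero[of "s * Y \<omega>"] by linarith
  have "(\<integral>\<^sup>+\<omega>. ennreal (exp (s * Y \<omega>)) \<partial>M) \<le> (\<integral>\<^sup>+\<omega>. ennreal (1 + Y \<omega> * (exp s - 1)) \<partial>M)"
    using chord by (intro nn_integral_mono ennreal_leI) auto
  also have "\<dots> = ennreal (\<integral>\<omega>. 1 + Y \<omega> * (exp s - 1) \<partial>M)"
    using int nonneg by (intro nn_integral_eq_integral AE_I2) auto
  also have "(\<integral>\<omega>. 1 + Y \<omega> * (exp s - 1) \<partial>M) = 1 + (exp s - 1) * expectation Y"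
    using int by (simp add: prob_space mult.commute)
  also have "\<dots> \<le> exp ((exp s - 1) * expectation Y)"
    by (rule exp_ge_add_one_self)
  finally show ?thesis
    by (simp add: ennreal_leI)
qed

lemma nn_integral_exp_mult_sum_le:
  fixes X :: "'i \<Rightarrow> 'a \<Rightarrow> real"
  assumes "finite I" and indep: "indep_vars (\<lambda>_. borel) X I"
    and rv: "\<And>i. i \<in> I \<Longrightarrow> X i \<in> borel_measurable M"
    and range01: "\<And>i \<omega>. i \<in> I \<Longrightarrow> \<omega> \<in> space M \<Longrightarrow> X i \<omega> \<in> {0..1}"
  shows "(\<integral>\<^sup>+\<omega>. ennreal (exp (s * (\<Sum>i\<in>I. X i \<omega>))) \<partial>M)
           \<le> ennreal (exp ((exp s - 1) * (\<Sum>i\<in>I. expectation (X i))))"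
proof -
  have "(\<integral>\<^sup>+\<omega>. ennreal (exp (s * (\<Sum>i\<in>I. X i \<omega>))) \<partial>M)
          = (\<integral>\<^sup>+\<omega>. (\<Prod>i\<in>I. ennreal (exp (s * X i \<omega>))) \<partial>M)"
    using \<open>finite I\<close> by (intro nn_integral_cong) (simp add: sum_distrib_left exp_sum prod_ennreal)
  also have "\<dots> = (\<Prod>i\<in>I. \<integral>\<^sup>+\<omega>. ennreal (exp (s * X i \<omega>)) \<partial>M)"
    using \<open>finite I\<close> by (intro indep_vars_nn_integral indep_vars_compose2[OF indep]) auto
  also have "\<dots> \<le> (\<Prod>i\<in>I. ennreal (exp ((exp s - 1) * expectation (X i))))"
    by (intro prod_mono_ennreal nn_integral_exp_mult_le rv range01)
  also have "\<dots> = ennreal (exp ((exp s - 1) * (\<Sum>i\<in>I. expectation (X i))))"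
    using \<open>finite I\<close> by (simp add: prod_ennreal exp_sum sum_distrib_left)
  finally show ?thesis .
qed

text \<open>Both tails at once: for negative \<open>s\<close> the event is a lower tail.\<close>
lemma prob_sum_tail_le_exp:
  fixes X :: "'i \<Rightarrow> 'a \<Rightarrow> real"
  assumes "finite I" and indep: "indep_vars (\<lambda>_. borel) X I"
    and rv: "\<And>i. i \<in> I \<Longrightarrow> X i \<in> borel_measurable M"
    and range01: "\<And>i \<omega>. i \<in> I \<Longrightarrow> \<omega> \<in> space M \<Longrightarrow> X i \<omega> \<in> {0..1}"
  shows "prob {\<omega>\<in>space M. s * a \<le> s * (\<Sum>i\<in>I. X i \<omega>)}
           \<le> exp (- s * a + (exp s - 1) * expectation (\<lambda>\<omega>. \<Sum>i\<in>I. X i \<omega>))"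
proof -
  have [measurable]: "(\<lambda>\<omega>. \<Sum>i\<in>I. X i \<omega>) \<in> borel_measurable M"
    using rv by auto
  have expectation_sum: "expectation (\<lambda>\<omega>. \<Sum>i\<in>I. X i \<omega>) = (\<Sum>i\<in>I. expectation (X i))"
    using rv range01 by (intro Bochner_Integration.integral_sum integrable_const_bound[where B = 1]) auto
  have "ennreal (prob {\<omega>\<in>space M. s * a \<le> s * (\<Sum>i\<in>I. X i \<omega>)})
          = emeasure M {\<omega>\<in>space M. s * a \<le> s * (\<Sum>i\<in>I. X i \<omega>)}"
    by (simp add: emeasure_eq_measure)
  also have "\<dots> \<le> ennreal (exp (- 1 * (s * a)))
      * (\<integral>\<^sup>+\<omega>. ennreal (exp (1 * (s * (\<Sum>i\<in>I. X i \<omega>)))) * indicator (space M) \<omega> \<partial>M)"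
    by (rule Chernoff_ineq_nn_integral_ge) auto
  also have "(\<integral>\<^sup>+\<omega>. ennreal (exp (1 * (s * (\<Sum>i\<in>I. X i \<omega>)))) * indicator (space M) \<omega> \<partial>M)
      = (\<integral>\<^sup>+\<omega>. ennreal (exp (s * (\<Sum>i\<in>I. X i \<omega>))) \<partial>M)"
    by (intro nn_integral_cong) auto
  also have "ennreal (exp (- 1 * (s * a))) * \<dots>
      \<le> ennreal (exp (- 1 * (s * a))) * ennreal (exp ((exp s - 1) * (\<Sum>i\<in>I. expectation (X i))))"
    by (intro mult_left_mono nn_integral_exp_mult_sum_le assms) auto
  also have "\<dots> = ennreal (exp (- s * a + (exp s - 1) * (\<Sum>i\<in>I. expectation (X i))))"
    by (simp add: ennreal_mult[symmetric] mult_exp_exp)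
  finally show ?thesis
    unfolding expectation_sum by simp
qed

lemma prob_le_of_upper_tails:
  fixes Y :: "'a \<Rightarrow> real" and T :: "real set"
  assumes [measurable]: "Y \<in> borel_measurable M" and "0 \<le> e"
    and tails: "\<And>t. t \<in> T \<Longrightarrow> prob {\<omega>\<in>space M. t \<le> Y \<omega>} \<le> e"
  shows "prob {\<omega>\<in>space M. Y \<omega> \<in> T} \<le> e"
proof (cases "T = {}")
  case True
  then show ?thesis
    using \<open>0 \<le> e\<close> by simp
next
  case False
  then obtain u :: "nat \<Rightarrow> real" where u: "antimono u" "\<And>k. \<exists>t\<in>T. t \<le> u k" "\<And>x. x \<in> T \<Longrightarrow> \<exists>k. u k \<le> x"
    using real_set_antimono_coinitial_seq by blast
  define B where "B k = {\<omega>\<in>space M. u k \<le> Y \<omega>}" for k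
  have B_events: "B k \<in> events" for k
    unfolding B_def by measurable
  have "prob (B k) \<le> e" for k
  proof -
    obtain t where "t \<in> T" "t \<le> u k"
      using u(2) by blast
    then have "prob (B k) \<le> prob {\<omega>\<in>space M. t \<le> Y \<omega>}"
      unfolding B_def by (intro finite_measure_mono) auto
    with tails[OF \<open>t \<in> T\<close>] show ?thesis
      by linarith
  qed
  moreover have "(\<lambda>k. prob (B k)) \<longlonglongrightarrow> prob (\<Union>k. B k)"
  proof (rule finite_Lim_measure_incseq)
    show "range B \<subseteq> events"
      using B_events by auto
    show "incseq B"
      unfolding incseq_def B_def using antimonoD[OF u(1)] by (auto intro: order_trans)
  qed
  ultimately have "prob (\<Union>k. B k) \<le> e"
    by (intro LIMSEQ_le_const2) auto
  moreover have "{\<omega>\<in>space M. Y \<omega> \<in> T} \<subseteq> (\<Union>k. B k)"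
    using u(3) by (fastforce simp: B_def)
  then have "prob {\<omega>\<in>space M. Y \<omega> \<in> T} \<le> prob (\<Union>k. B k)"
    using B_events by (intro finite_measure_mono) auto
  ultimately show ?thesis
    by linarith
qed

lemma prob_le_of_lower_tails:
  fixes Y :: "'a \<Rightarrow> real" and T :: "real set"
  assumes [measurable]: "Y \<in> borel_measurable M" and "0 \<le> e"
    and tails: "\<And>t. t \<in> T \<Longrightarrow> prob {\<omega>\<in>space M. Y \<omega> \<le> t} \<le> e"
  shows "prob {\<omega>\<in>space M. Y \<omega> \<in> T} \<le> e"
proof -
  have "prob {\<omega>\<in>space M. - Y \<omega> \<in> uminus ` T} \<le> e"
    using tails \<open>0 \<le> e\<close> by (intro prob_le_of_upper_tails) auto
  moreover have "{\<omega>\<in>space M. - Y \<omega> \<in> uminus ` T} = {\<omega>\<in>space M. Y \<omega> \<in> T}"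
    by auto
  ultimately show ?thesis
    by simp
qed

lemma prob_sum_ge_le_chernoff_delta:
  fixes X :: "'i \<Rightarrow> 'a \<Rightarrow> real"
  assumes "finite I" and "indep_vars (\<lambda>_. borel) X I"
    and "\<And>i. i \<in> I \<Longrightarrow> X i \<in> borel_measurable M"
    and "\<And>i \<omega>. i \<in> I \<Longrightarrow> \<omega> \<in> space M \<Longrightarrow> X i \<omega> \<in> {0..1}"
    and eps: "0 < eps" "eps < 1" and phi: "- 6 * ln eps < phi"
    and mu: "expectation (\<lambda>\<omega>. \<Sum>i\<in>I. X i \<omega>) \<le> phi / (1 + chernoff_delta eps phi)"
  shows "prob {\<omega>\<in>space M. phi \<le> (\<Sum>i\<in>I. X i \<omega>)} \<le> eps"
proof -
  define d where "d = chernoff_delta eps phi"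
  define \<mu> where "\<mu> = expectation (\<lambda>\<omega>. \<Sum>i\<in>I. X i \<omega>)"
  have d: "0 < d" "d < 1"
    using chernoff_delta_characterization(1)[OF eps phi] by (simp_all add: d_def)
  have "0 < phi"
    using phi ln_less_zero[OF eps] by linarith
  have "prob {\<omega>\<in>space M. phi \<le> (\<Sum>i\<in>I. X i \<omega>)}
          = prob {\<omega>\<in>space M. ln (1 + d) * phi \<le> ln (1 + d) * (\<Sum>i\<in>I. X i \<omega>)}"
    using d by (simp add: mult_le_cancel_left_pos)
  also have "\<dots> \<le> exp (- ln (1 + d) * phi + (exp (ln (1 + d)) - 1) * \<mu>)"
    unfolding \<mu>_def by (rule prob_sum_tail_le_exp) fact+
  also have "\<dots> = exp (- ln (1 + d) * phi + d * \<mu>)"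
    using d by simp
  also have "\<dots> \<le> exp (ln eps)"
    using upper_chernoff_exponent_le[OF d(1) \<open>0 < phi\<close>, of \<mu>] chernoff_delta_exponent[OF eps phi] mu
    by (simp add: d_def \<mu>_def)
  finally show ?thesis
    using eps by simp
qed

lemma prob_sum_le_le_chernoff_delta:
  fixes X :: "'i \<Rightarrow> 'a \<Rightarrow> real"
  assumes "finite I" and "indep_vars (\<lambda>_. borel) X I"
    and "\<And>i. i \<in> I \<Longrightarrow> X i \<in> borel_measurable M"
    and "\<And>i \<omega>. i \<in> I \<Longrightarrow> \<omega> \<in> space M \<Longrightarrow> X i \<omega> \<in> {0..1}"
    and eps: "0 < eps" "eps < 1" and phi: "- 6 * ln eps < phi"
    and mu: "phi / (1 - chernoff_delta eps phi) \<le> expectation (\<lambda>\<omega>. \<Sum>i\<in>I. X i \<omega>)"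
  shows "prob {\<omega>\<in>space M. (\<Sum>i\<in>I. X i \<omega>) \<le> phi} \<le> eps"
proof -
  define d where "d = chernoff_delta eps phi"
  define \<mu> where "\<mu> = expectation (\<lambda>\<omega>. \<Sum>i\<in>I. X i \<omega>)"
  have d: "0 < d" "d < 1"
    using chernoff_delta_characterization(1)[OF eps phi] by (simp_all add: d_def)
  have "0 < phi"
    using phi ln_less_zero[OF eps] by linarith
  have "prob {\<omega>\<in>space M. (\<Sum>i\<in>I. X i \<omega>) \<le> phi}
          = prob {\<omega>\<in>space M. ln (1 - d) * phi \<le> ln (1 - d) * (\<Sum>i\<in>I. X i \<omega>)}"
    using d by (simp add: mult_le_cancel_left_neg)
  also have "\<dots> \<le> exp (- ln (1 - d) * phi + (exp (ln (1 - d)) - 1) * \<mu>)"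
    unfolding \<mu>_def by (rule prob_sum_tail_le_exp) fact+
  also have "\<dots> = exp (- ln (1 - d) * phi - d * \<mu>)"
    using d by simp
  also have "\<dots> \<le> exp (ln eps)"
    using lower_chernoff_exponent_le[OF d \<open>0 < phi\<close>, of \<mu>] chernoff_delta_exponent[OF eps phi] mu
    by (simp add: d_def \<mu>_def)
  finally show ?thesis
    using eps by simp
qed

end

theorem lemma3:
  fixes M :: "'a measure" and X :: "nat \<Rightarrow> 'a \<Rightarrow> real" and n :: nat and eps :: real
  assumes "prob_space M"
    and rv: "\<And>i. i \<in> {1..n} \<Longrightarrow> X i \<in> borel_measurable M"
    and indep: "prob_space.indep_vars M (\<lambda>_. borel) X {1..n}"
    and discrete: "\<And>i. i \<in> {1..n} \<Longrightarrow> countable (X i ` space M)"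
    and range01: "\<And>i \<omega>. i \<in> {1..n} \<Longrightarrow> \<omega> \<in> space M \<Longrightarrow> X i \<omega> \<in> {0..1}"
    and eps: "0 < eps" "eps < 1"
  shows "(\<forall>phi. phi > - 6 * ln eps \<longrightarrow>
            chernoff_delta eps phi \<in> {0<..<1} \<and>
            (\<forall>d>0. exp (- (d^2 / (2 + d)) * (phi / (1 + d))) = eps
                     \<longleftrightarrow> d = chernoff_delta eps phi))
      \<and> prob_space.prob M {\<omega> \<in> space M.
            (\<Sum>i=1..n. X i \<omega>) > - 6 * ln eps \<and>
            (\<Sum>i=1..n. X i \<omega>) / (1 + chernoff_delta eps (\<Sum>i=1..n. X i \<omega>))
              \<ge> prob_space.expectation M (\<lambda>\<omega>. \<Sum>i=1..n. X i \<omega>)} \<le> eps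
      \<and> prob_space.prob M {\<omega> \<in> space M.
            (\<Sum>i=1..n. X i \<omega>) > - 6 * ln eps \<and>
            (\<Sum>i=1..n. X i \<omega>) / (1 - chernoff_delta eps (\<Sum>i=1..n. X i \<omega>))
              \<le> prob_space.expectation M (\<lambda>\<omega>. \<Sum>i=1..n. X i \<omega>)} \<le> eps"
proof -
  interpret prob_space M by fact
  define \<mu> where "\<mu> = expectation (\<lambda>\<omega>. \<Sum>i=1..n. X i \<omega>)"
  have sum_measurable: "(\<lambda>\<omega>. \<Sum>i=1..n. X i \<omega>) \<in> borel_measurable M"
    using rv by auto
  have "prob {\<omega>\<in>space M. (\<Sum>i=1..n. X i \<omega>)
          \<in> {phi. - 6 * ln eps < phi \<and> \<mu> \<le> phi / (1 + chernoff_delta eps phi)}} \<le> eps"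
    using eps unfolding \<mu>_def
    by (intro prob_le_of_upper_tails sum_measurable prob_sum_ge_le_chernoff_delta indep rv range01) auto
  moreover have "prob {\<omega>\<in>space M. (\<Sum>i=1..n. X i \<omega>)
          \<in> {phi. - 6 * ln eps < phi \<and> phi / (1 - chernoff_delta eps phi) \<le> \<mu>}} \<le> eps"
    using eps unfolding \<mu>_def
    by (intro prob_le_of_lower_tails sum_measurable prob_sum_le_le_chernoff_delta indep rv range01) auto
  ultimately show ?thesis
    using chernoff_delta_characterization[OF eps] by (simp add: \<mu>_def)
qed

end
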